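(* Let $C\subseteq 2^X$ be an ample class with a representation map $r$, let $B$ be a cube of $2^X$ and $Y\subseteq X$. Then: (1) $r_B:C\cap B\to X(C\cap B)$, $r_B(c)=r(c)\cap\mathrm{supp}(B)$, is a representation map for $C\cap B$; (2) $r^Y:C^Y\to X(C^Y)$ is a representation map for $C^Y$, where for $c\in C^Y$, letting $B_c$ be the unique cube of $C$ with support $Y$ and tag $c$ and $c^{B_c}$ the unique concept of $B_c$ with $r(c^{B_c})\cap Y=Y$, we set $r^Y(c)=r(c^{B_c})\setminus Y$; (3) $r_Y:C_Y\to X(C_Y)$ is a representation map for $C_Y$, where for $c\in C_Y$, letting $B_c$ be the unique cube of $2^X$ with support $Y$ and tag $c$ and $c_{B_c}$ the unique concept of $C\cap B_c$ with $r(c_{B_c})\cap Y=\varnothing$, we set $r_Y(c)=r(c_{B_c})$.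
   Context: Concepts are subsets of the finite set $X$, identified with characteristic functions; $c|Y$ is restriction and $C|Y=\{c|Y:c\in C\}$. $Y$ is shattered by $C$ if $C|Y=2^Y$. A cube of $2^X$ is $\{T\cup Z:Z\subseteq Y\}$ with $Y\subseteq X$ its support $\mathrm{supp}$ and $T\subseteq X\setminus Y$ its tag; a cube of $C$ is one contained in $C$. $C$ is ample if every shattered set is the support of a cube of $C$; $X(C)$ is the family of shattered sets. $C_Y=C|(X\setminus Y)$ (restriction) and the reduction $C^Y$ is the class on $X\setminus Y$ consisting of the tags of all cubes of $C$ with support $Y$; $C\cap B$, $C_Y$, $C^Y$ are ample when $C$ is. A representation map for an ample class $E$ is a bijection $r:E\to X(E)$ with $c|(r(c)\cup r(c'))\ne c'|(r(c)\cup r(c'))$ for all distinct $c,c'\in E$. (For a representation map $r$ of $C$, the concepts $c^{B_c}$ and $c_{B_c}$ above exist and are unique.) *)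

theory Defs
  imports Main
begin

(* Concepts on ground set X are sets c \<subseteq> X (characteristic functions). *)

definition restr :: "'a set set \<Rightarrow> 'a set \<Rightarrow> 'a set set" where
  "restr C Y = (\<lambda>c. c \<inter> Y) ` C"

definition shattered :: "'a set set \<Rightarrow> 'a set \<Rightarrow> bool" where
  "shattered C Y \<longleftrightarrow> restr C Y = Pow Y"

definition shattered_sets :: "'a set \<Rightarrow> 'a set set \<Rightarrow> 'a set set" where
  "shattered_sets X C = {Y. Y \<subseteq> X \<and> shattered C Y}"

definition cube :: "'a set \<Rightarrow> 'a set \<Rightarrow> 'a set set" where
  "cube T Y = {T \<union> Z | Z. Z \<subseteq> Y}"

definition ample :: "'a set \<Rightarrow> 'a set set \<Rightarrow> bool" where
  "ample X C \<longleftrightarrow> C \<subseteq> Pow X \<and>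
     (\<forall>Y \<in> shattered_sets X C. \<exists>T. T \<subseteq> X - Y \<and> cube T Y \<subseteq> C)"

definition reduction :: "'a set \<Rightarrow> 'a set set \<Rightarrow> 'a set \<Rightarrow> 'a set set" where
  "reduction X C Y = {T. T \<subseteq> X - Y \<and> cube T Y \<subseteq> C}"

definition is_rep_map :: "'a set \<Rightarrow> 'a set set \<Rightarrow> ('a set \<Rightarrow> 'a set) \<Rightarrow> bool" where
  "is_rep_map X E r \<longleftrightarrow> bij_betw r E (shattered_sets X E) \<and>
     (\<forall>c\<in>E. \<forall>c'\<in>E. c \<noteq> c' \<longrightarrow> c \<inter> (r c \<union> r c') \<noteq> c' \<inter> (r c \<union> r c'))"

end

theory Submission
  imports Defs
begin

text \<open>
  By Pajor's lemma a class shatters at least as many sets as it has concepts.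
  Let \<open>r\<close> be a representation map of \<open>C\<close> and \<open>A \<subseteq> X\<close>. Then \<open>r\<close> maps the concepts
  represented inside \<open>A\<close> onto the subsets of \<open>A\<close> shattered by \<open>C\<close>, and the non-clashing
  condition makes their traces on \<open>A\<close> distinct; Pajor's lemma for \<open>C|A\<close> then shows that every
  trace on \<open>A\<close> is the trace of a concept represented inside \<open>A\<close>. Conversely, a non-clashing map
  with this trace property is a representation map, by induction on \<open>A\<close>. The three maps of the
  theorem are non-clashing by a direct computation, and their trace properties reduce to that
  of \<open>r\<close> on suitable subsets of \<open>X\<close>, using that every \<open>c \<in> C\<close> spans a cube of \<open>C\<close> with
  support \<open>r c\<close>.
\<close>

section \<open>Shattering and cubes\<close>

lemma restr_subset_Pow: "restr C Y \<subseteq> Pow Y"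
  unfolding restr_def by auto

lemma shattered_iff_Pow_subset: "shattered C Y \<longleftrightarrow> Pow Y \<subseteq> restr C Y"
  unfolding shattered_def using restr_subset_Pow by blast

lemma restr_restr: "A \<subseteq> B \<Longrightarrow> restr (restr C B) A = restr C A"
  unfolding restr_def image_image by (rule image_cong) auto

lemma shattered_restr: "A \<subseteq> B \<Longrightarrow> shattered (restr C B) A \<longleftrightarrow> shattered C A"
  unfolding shattered_def by (simp add: restr_restr)

lemma shattered_subset:
  assumes "shattered C A" "B \<subseteq> A"
  shows "shattered C B"
proof -
  have "restr C B = restr (Pow A) B"
    using assms restr_restr[of B A C] unfolding shattered_def by simp
  also have "\<dots> = Pow B"
    using assms(2) unfolding restr_def by (auto intro!: image_eqI[where x = "_ \<inter> B"])
  finally show ?thesis unfolding shattered_def .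
qed

lemma shattered_sets_restr:
  "A \<subseteq> X \<Longrightarrow> shattered_sets A (restr C A) = {B \<in> shattered_sets X C. B \<subseteq> A}"
  unfolding shattered_sets_def using shattered_restr by blast

lemma mem_cube_iff:
  assumes "T \<inter> S = {}"
  shows "d \<in> cube T S \<longleftrightarrow> d - S = T"
proof
  assume "d - S = T"
  then have "d = T \<union> (d \<inter> S)" by auto
  then show "d \<in> cube T S" unfolding cube_def by blast
qed (use assms in \<open>auto simp: cube_def\<close>)

lemma mem_cube_Diff_iff: "d \<in> cube (f - S) S \<longleftrightarrow> d - S = f - S"
  by (rule mem_cube_iff) auto

lemma mem_cube_Int_Diff_iff: "d \<subseteq> X \<Longrightarrow> d \<in> cube (c \<inter> A) (X - A) \<longleftrightarrow> d \<inter> A = c \<inter> A"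
  by (subst mem_cube_iff) auto

lemma cube_Diff_subset_cube_Diff:
  assumes "Y \<subseteq> R"
  shows "cube (f - Y) Y \<subseteq> cube (f - R) R"
proof
  fix x assume "x \<in> cube (f - Y) Y"
  then have "x - Y = f - Y" by (simp add: mem_cube_Diff_iff)
  then have "x - R = f - R" using assms unfolding set_eq_iff by blast
  then show "x \<in> cube (f - R) R" by (simp add: mem_cube_Diff_iff)
qed

lemma shattered_sets_if_cube_subset:
  assumes "cube T S \<subseteq> E" and "T \<inter> S = {}" and "S \<subseteq> X"
  shows "S \<in> shattered_sets X E"
proof -
  have "Z \<in> restr E S" if "Z \<subseteq> S" for Z
  proof -
    have "T \<union> Z \<in> cube T S" using that assms(2) mem_cube_iff by blast
    then have "T \<union> Z \<in> E" using assms(1) by blast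
    moreover have "Z = (T \<union> Z) \<inter> S" using that assms(2) by blast
    ultimately show ?thesis unfolding restr_def by blast
  qed
  then show ?thesis
    using assms(3) unfolding shattered_sets_def shattered_iff_Pow_subset by blast
qed

lemma cube_subset_if_shattered:
  assumes "T \<inter> S = {}" and "E \<subseteq> cube T S" and "shattered E S"
  shows "cube T S \<subseteq> E"
proof
  fix b assume b: "b \<in> cube T S"
  then have "b \<inter> S \<in> restr E S" using assms(3) unfolding shattered_def by blast
  then obtain e where "e \<in> E" "b \<inter> S = e \<inter> S" unfolding restr_def by auto
  moreover have "b - S = e - S"
    using b \<open>e \<in> E\<close> assms(2) mem_cube_iff[OF assms(1)] by auto
  ultimately have "b = e" by blast
  with \<open>e \<in> E\<close> show "b \<in> E" by simp
qed

section \<open>Pajor's lemma\<close>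

lemma restr_image_Diff_singleton: "x \<notin> A \<Longrightarrow> restr ((\<lambda>d. d - {x}) ` D) A = restr D A"
  unfolding restr_def image_image by (rule image_cong) auto

lemma shattered_insert_if_shattered_pairs:
  assumes "x \<notin> A" and "shattered {d \<in> D. x \<notin> d \<and> insert x d \<in> D} A"
  shows "shattered D (insert x A)"
  unfolding shattered_iff_Pow_subset
proof
  fix Z assume Z: "Z \<in> Pow (insert x A)"
  then have "Z - {x} \<in> restr {d \<in> D. x \<notin> d \<and> insert x d \<in> D} A"
    using assms(2) unfolding shattered_def by auto
  then obtain d where d: "d \<in> D" "x \<notin> d" "insert x d \<in> D" "d \<inter> A = Z - {x}"
    unfolding restr_def by auto
  have "Z = (if x \<in> Z then insert x d else d) \<inter> insert x A"
    using Z d(2,4) by auto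
  then show "Z \<in> restr D (insert x A)"
    unfolding restr_def using d(1,3) by (auto intro: image_eqI)
qed

text \<open>\<open>d \<mapsto> d - {x}\<close> is two-to-one exactly on the pairs \<open>d, insert x d\<close> of \<open>D\<close>.\<close>

lemma card_eq_card_image_Diff_singleton_plus_pairs:
  assumes "finite D"
  shows "card D = card ((\<lambda>d. d - {x}) ` D) + card {d \<in> D. x \<notin> d \<and> insert x d \<in> D}"
proof -
  define P where "P = {d \<in> D. x \<notin> d \<and> insert x d \<in> D}"
  define D' where "D' = D - insert x ` P"
  have "insert x ` P \<subseteq> D" unfolding P_def by auto
  then have "card D = card D' + card (insert x ` P)"
    unfolding D'_def using assms by (simp add: card_Diff_subset card_mono finite_subset)
  moreover have "inj_on (insert x) P"
    unfolding P_def by (auto simp: inj_on_def insert_ident)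
  then have "card (insert x ` P) = card P" by (rule card_image)
  moreover have "inj_on (\<lambda>d. d - {x}) D'"
  proof (rule inj_onI)
    fix d d' assume d: "d \<in> D'" "d' \<in> D'" "d - {x} = d' - {x}"
    have no_pair: "d2 \<noteq> insert x d1" if "x \<notin> d1" "d1 \<in> D'" "d2 \<in> D'" for d1 d2
      using that unfolding D'_def P_def by auto
    show "d = d'"
    proof (cases "x \<in> d \<longleftrightarrow> x \<in> d'")
      case True
      then show ?thesis using d(3) unfolding set_eq_iff by blast
    next
      case False
      then have "d' = insert x d \<and> x \<notin> d \<or> d = insert x d' \<and> x \<notin> d'"
        using d(3) by (metis insert_Diff_single insert_absorb Diff_insert_absorb)
      then show ?thesis using no_pair d(1,2) by blast
    qed
  qed
  then have "card D' = card ((\<lambda>d. d - {x}) ` D')" by (simp add: card_image)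
  moreover have "(\<lambda>d. d - {x}) ` D = (\<lambda>d. d - {x}) ` D'"
  proof (intro equalityI subsetI)
    fix y assume "y \<in> (\<lambda>d. d - {x}) ` D"
    then obtain d where d: "d \<in> D" "y = d - {x}" by blast
    show "y \<in> (\<lambda>d. d - {x}) ` D'"
    proof (cases "d \<in> D'")
      case False
      then obtain p where "p \<in> P" "d = insert x p" using d(1) unfolding D'_def by blast
      moreover then have "p \<in> D'" unfolding D'_def P_def by auto
      ultimately show ?thesis using d(2) by auto
    qed (use d(2) in blast)
  qed (auto simp: D'_def)
  ultimately show ?thesis unfolding P_def by simp
qed

lemma card_shattered_sets_insert_ge:
  assumes "finite G" and "x \<notin> G"
  shows "card (shattered_sets G ((\<lambda>d. d - {x}) ` D))
      + card (shattered_sets G {d \<in> D. x \<notin> d \<and> insert x d \<in> D})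
    \<le> card (shattered_sets (insert x G) D)"
proof -
  define D0 where "D0 = (\<lambda>d. d - {x}) ` D"
  define D1 where "D1 = {d \<in> D. x \<notin> d \<and> insert x d \<in> D}"
  have fin: "finite (shattered_sets (insert x G) D)"
    using assms(1) unfolding shattered_sets_def by simp
  have sh0: "shattered_sets G D0 \<subseteq> shattered_sets (insert x G) D"
  proof
    fix A assume "A \<in> shattered_sets G D0"
    moreover then have "x \<notin> A" using assms(2) unfolding shattered_sets_def by auto
    ultimately show "A \<in> shattered_sets (insert x G) D"
      unfolding shattered_sets_def shattered_def D0_def by (auto simp: restr_image_Diff_singleton)
  qed
  have sh1: "insert x ` shattered_sets G D1 \<subseteq> shattered_sets (insert x G) D"
  proof
    fix B assume "B \<in> insert x ` shattered_sets G D1"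
    then obtain A where "B = insert x A" "A \<subseteq> G" "shattered D1 A"
      unfolding shattered_sets_def by auto
    moreover then have "x \<notin> A" using assms(2) by auto
    ultimately show "B \<in> shattered_sets (insert x G) D"
      using shattered_insert_if_shattered_pairs[of x A D]
      unfolding shattered_sets_def D1_def by auto
  qed
  have "inj_on (insert x) (shattered_sets G D1)"
    using assms(2) unfolding shattered_sets_def by (auto simp: inj_on_def insert_ident)
  then have "card (shattered_sets G D1) = card (insert x ` shattered_sets G D1)"
    by (simp add: card_image)
  moreover have "shattered_sets G D0 \<inter> insert x ` shattered_sets G D1 = {}"
    using assms(2) unfolding shattered_sets_def by auto
  ultimately have "card (shattered_sets G D0) + card (shattered_sets G D1)
      = card (shattered_sets G D0 \<union> insert x ` shattered_sets G D1)"
    using finite_subset[OF sh0 fin] finite_subset[OF sh1 fin] by (simp add: card_Un_disjoint)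
  also have "\<dots> \<le> card (shattered_sets (insert x G) D)"
    using sh0 sh1 fin by (intro card_mono) auto
  finally show ?thesis unfolding D0_def D1_def .
qed

lemma card_le_card_shattered_sets:
  "finite G \<Longrightarrow> D \<subseteq> Pow G \<Longrightarrow> card D \<le> card (shattered_sets G D)"
proof (induction G arbitrary: D rule: finite_induct)
  case empty
  show ?case
  proof (cases "D = {}")
    case False
    with empty have "D = {{}}" by auto
    moreover from this have "shattered D {}" by (simp add: shattered_def restr_def)
    ultimately have "shattered_sets {} D = {{}}" unfolding shattered_sets_def by auto
    with \<open>D = {{}}\<close> show ?thesis by simp
  qed simp
next
  case (insert x G)
  have "finite D" by (rule finite_subset[OF insert.prems]) (simp add: insert.hyps(1))
  then have "card D = card ((\<lambda>d. d - {x}) ` D) + card {d \<in> D. x \<notin> d \<and> insert x d \<in> D}"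
    by (rule card_eq_card_image_Diff_singleton_plus_pairs)
  also have "\<dots> \<le> card (shattered_sets G ((\<lambda>d. d - {x}) ` D))
      + card (shattered_sets G {d \<in> D. x \<notin> d \<and> insert x d \<in> D})"
    using insert.prems by (intro add_mono insert.IH) auto
  also have "\<dots> \<le> card (shattered_sets (insert x G) D)"
    using insert.hyps by (rule card_shattered_sets_insert_ge)
  finally show ?case .
qed

section \<open>Non-clashing maps\<close>

definition non_clashing :: "('a set \<Rightarrow> 'a set) \<Rightarrow> 'a set set \<Rightarrow> bool" where
  "non_clashing \<rho> D \<longleftrightarrow>
     (\<forall>c\<in>D. \<forall>c'\<in>D. c \<noteq> c' \<longrightarrow> c \<inter> (\<rho> c \<union> \<rho> c') \<noteq> c' \<inter> (\<rho> c \<union> \<rho> c'))"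

lemma is_rep_map_iff: "is_rep_map X E \<rho> \<longleftrightarrow> bij_betw \<rho> E (shattered_sets X E) \<and> non_clashing \<rho> E"
  unfolding is_rep_map_def non_clashing_def ..

lemma is_rep_map_cong:
  assumes "\<And>c. c \<in> E \<Longrightarrow> \<rho> c = \<rho>' c"
  shows "is_rep_map X E \<rho> \<longleftrightarrow> is_rep_map X E \<rho>'"
proof -
  have "bij_betw \<rho> E (shattered_sets X E) \<longleftrightarrow> bij_betw \<rho>' E (shattered_sets X E)"
    using assms by (rule bij_betw_cong)
  moreover have "non_clashing \<rho> E \<longleftrightarrow> non_clashing \<rho>' E"
    unfolding non_clashing_def using assms by auto
  ultimately show ?thesis unfolding is_rep_map_iff by simp
qed

lemma inj_on_Int_if_non_clashing:
  assumes "non_clashing \<rho> D"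
  shows "inj_on (\<lambda>d. d \<inter> A) {d \<in> D. \<rho> d \<subseteq> A}"
proof (rule inj_onI)
  fix d d' assume d: "d \<in> {d \<in> D. \<rho> d \<subseteq> A}" "d' \<in> {d \<in> D. \<rho> d \<subseteq> A}" "d \<inter> A = d' \<inter> A"
  then have "d \<inter> (\<rho> d \<union> \<rho> d') = d' \<inter> (\<rho> d \<union> \<rho> d')" by auto
  then show "d = d'" using assms d(1,2) unfolding non_clashing_def by blast
qed

lemma bij_betw_Int_if_traces:
  assumes "non_clashing \<rho> D" and traces: "\<And>d. d \<in> D \<Longrightarrow> \<exists>e\<in>D. \<rho> e \<subseteq> A \<and> e \<inter> A = d \<inter> A"
  shows "bij_betw (\<lambda>d. d \<inter> A) {d \<in> D. \<rho> d \<subseteq> A} (restr D A)"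
  unfolding bij_betw_def
proof
  show "inj_on (\<lambda>d. d \<inter> A) {d \<in> D. \<rho> d \<subseteq> A}"
    using assms(1) by (rule inj_on_Int_if_non_clashing)
  show "(\<lambda>d. d \<inter> A) ` {d \<in> D. \<rho> d \<subseteq> A} = restr D A"
  proof (intro equalityI subsetI)
    fix s assume "s \<in> restr D A"
    then obtain d where "d \<in> D" "s = d \<inter> A" unfolding restr_def by blast
    then obtain e where "e \<in> D" "\<rho> e \<subseteq> A" "s = e \<inter> A" using traces by metis
    then show "s \<in> (\<lambda>d. d \<inter> A) ` {d \<in> D. \<rho> d \<subseteq> A}" by blast
  qed (auto simp: restr_def)
qed

lemma bij_betw_rep_psubset:
  assumes "\<And>B. B \<subset> A \<Longrightarrow> bij_betw \<rho> {d \<in> D. \<rho> d \<subseteq> B} {B'. B' \<subseteq> B \<and> P B'}"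
  shows "bij_betw \<rho> {d \<in> D. \<rho> d \<subset> A} {B. B \<subset> A \<and> P B}"
  unfolding bij_betw_def
proof
  show "inj_on \<rho> {d \<in> D. \<rho> d \<subset> A}"
  proof (rule inj_onI)
    fix d d' assume "d \<in> {d \<in> D. \<rho> d \<subset> A}" "d' \<in> {d \<in> D. \<rho> d \<subset> A}" "\<rho> d = \<rho> d'"
    then show "d = d'"
      using assms[of "\<rho> d"] unfolding bij_betw_def inj_on_def by auto
  qed
  show "\<rho> ` {d \<in> D. \<rho> d \<subset> A} = {B. B \<subset> A \<and> P B}"
  proof (intro equalityI subsetI)
    fix B assume "B \<in> \<rho> ` {d \<in> D. \<rho> d \<subset> A}"
    then obtain d where d: "d \<in> D" "\<rho> d \<subset> A" "B = \<rho> d" by blast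
    then have "B \<in> \<rho> ` {e \<in> D. \<rho> e \<subseteq> B}" by auto
    with d(2,3) show "B \<in> {B. B \<subset> A \<and> P B}"
      using assms[of B] unfolding bij_betw_def by auto
  next
    fix B assume B: "B \<in> {B. B \<subset> A \<and> P B}"
    then have "B \<in> \<rho> ` {d \<in> D. \<rho> d \<subseteq> B}"
      using assms[of B] unfolding bij_betw_def by auto
    with B show "B \<in> \<rho> ` {d \<in> D. \<rho> d \<subset> A}" by blast
  qed
qed

text \<open>Once the traces on \<open>A\<close> are realised, Pajor's lemma counts the concepts represented
  by \<open>A\<close> itself: there is one if \<open>A\<close> is shattered and none otherwise.\<close>

lemma bij_betw_rep_shattered_if_traces:
  assumes "finite A" and "non_clashing \<rho> D"
    and "\<And>B d. B \<subseteq> A \<Longrightarrow> d \<in> D \<Longrightarrow> \<exists>e\<in>D. \<rho> e \<subseteq> B \<and> e \<inter> B = d \<inter> B"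
  shows "bij_betw \<rho> {d \<in> D. \<rho> d \<subseteq> A} {B. B \<subseteq> A \<and> shattered D B}"
  using assms(1,3)
proof (induction A rule: finite_psubset_induct)
  case (psubset A)
  define R where "R = {d \<in> D. \<rho> d \<subseteq> A}"
  define Rm where "Rm = {d \<in> D. \<rho> d \<subset> A}"
  define SH where "SH = {B. B \<subseteq> A \<and> shattered D B}"
  define SHm where "SHm = {B. B \<subset> A \<and> shattered D B}"
  have bij_m: "bij_betw \<rho> Rm SHm"
    unfolding Rm_def SHm_def
  proof (rule bij_betw_rep_psubset)
    fix B assume B: "B \<subset> A"
    then have "\<And>B' d. B' \<subseteq> B \<Longrightarrow> d \<in> D \<Longrightarrow> \<exists>e\<in>D. \<rho> e \<subseteq> B' \<and> e \<inter> B' = d \<inter> B'"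
      using psubset.prems by (meson psubset_imp_subset subset_trans)
    with B show "bij_betw \<rho> {d \<in> D. \<rho> d \<subseteq> B} {B'. B' \<subseteq> B \<and> shattered D B'}"
      by (rule psubset.IH)
  qed
  have "bij_betw (\<lambda>d. d \<inter> A) R (restr D A)"
    unfolding R_def using assms(2) psubset.prems by (intro bij_betw_Int_if_traces) auto
  then have card_R: "card R = card (restr D A)" by (rule bij_betw_same_card)
  have fin_R: "finite R"
    using \<open>bij_betw (\<lambda>d. d \<inter> A) R (restr D A)\<close> psubset.hyps
    by (meson bij_betw_finite finite_Pow_iff finite_subset restr_subset_Pow)
  have Rm_R: "Rm \<subseteq> R" unfolding Rm_def R_def by auto
  show ?case
  proof (cases "shattered D A")
    case False
    then have "SH = SHm" unfolding SH_def SHm_def by auto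
    have "card (restr D A) \<le> card (shattered_sets A (restr D A))"
      using psubset.hyps restr_subset_Pow by (rule card_le_card_shattered_sets)
    also have "shattered_sets A (restr D A) = SH"
      unfolding shattered_sets_def SH_def using shattered_restr by blast
    finally have "card R \<le> card Rm"
      using card_R bij_betw_same_card[OF bij_m] \<open>SH = SHm\<close> by simp
    then have "Rm = R" using card_seteq[OF fin_R Rm_R] by blast
    then show ?thesis using bij_m \<open>SH = SHm\<close> unfolding R_def SH_def by simp
  next
    case True
    then have SH: "SH = insert A SHm" and "A \<notin> SHm"
      unfolding SH_def SHm_def by auto
    have "finite SHm"
      by (rule finite_subset[of _ "Pow A"]) (auto simp: SHm_def psubset.hyps)
    have "card R = card (Pow A)"
      using True card_R unfolding shattered_def by simp
    also have "Pow A = SH"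
      unfolding SH_def using shattered_subset[OF True] by auto
    also have "card SH = Suc (card Rm)"
      using SH \<open>A \<notin> SHm\<close> \<open>finite SHm\<close> bij_betw_same_card[OF bij_m] by simp
    finally have "card (R - Rm) = 1"
      using fin_R Rm_R by (simp add: card_Diff_subset finite_subset)
    then obtain d0 where d0: "R - Rm = {d0}" by (rule card_1_singletonE)
    then have R: "R = insert d0 Rm" and "\<rho> d0 = A"
      using Rm_R unfolding R_def Rm_def by auto
    moreover have "d0 \<notin> Rm" using d0 by blast
    ultimately have "bij_betw \<rho> (insert d0 Rm) (insert (\<rho> d0) SHm)"
      using bij_m \<open>A \<notin> SHm\<close> notIn_Un_bij_betw3[of d0 Rm \<rho> SHm] by simp
    then show ?thesis using R \<open>\<rho> d0 = A\<close> SH unfolding R_def SH_def by simp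
  qed
qed

lemma is_rep_mapI:
  assumes "finite G" and "\<And>d. d \<in> D \<Longrightarrow> \<rho> d \<subseteq> G" and "non_clashing \<rho> D"
    and "\<And>A d. A \<subseteq> G \<Longrightarrow> d \<in> D \<Longrightarrow> \<exists>e\<in>D. \<rho> e \<subseteq> A \<and> e \<inter> A = d \<inter> A"
  shows "is_rep_map G D \<rho>"
proof -
  have "bij_betw \<rho> {d \<in> D. \<rho> d \<subseteq> G} {B. B \<subseteq> G \<and> shattered D B}"
    using assms(1,3,4) by (rule bij_betw_rep_shattered_if_traces)
  moreover have "{d \<in> D. \<rho> d \<subseteq> G} = D" using assms(2) by auto
  ultimately show ?thesis
    using assms(3) unfolding is_rep_map_iff shattered_sets_def by simp
qed

section \<open>Representation maps of subcubes, reductions and restrictions\<close>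

locale representation_map =
  fixes X :: "'a set" and C :: "'a set set" and r :: "'a set \<Rightarrow> 'a set"
  assumes finite_X: "finite X" and C_subset_Pow: "C \<subseteq> Pow X" and rep: "is_rep_map X C r"
begin

lemma bij_betw_shattered_sets: "bij_betw r C (shattered_sets X C)"
  and non_clashing_r: "non_clashing r C"
  using rep unfolding is_rep_map_iff by auto

lemma rep_subset: "c \<in> C \<Longrightarrow> r c \<subseteq> X"
  using bij_betw_shattered_sets unfolding bij_betw_def shattered_sets_def by auto

lemma concept_subset: "c \<in> C \<Longrightarrow> c \<subseteq> X"
  using C_subset_Pow by auto

lemma bij_betw_rep_below:
  assumes "A \<subseteq> X"
  shows "bij_betw r {c \<in> C. r c \<subseteq> A} (shattered_sets A (restr C A))"
proof (rule bij_betw_subset[OF bij_betw_shattered_sets])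
  have "r ` {c \<in> C. r c \<subseteq> A} = {B \<in> r ` C. B \<subseteq> A}" by blast
  also have "r ` C = shattered_sets X C"
    using bij_betw_shattered_sets by (simp add: bij_betw_def)
  finally have "r ` {c \<in> C. r c \<subseteq> A} = {B \<in> shattered_sets X C. B \<subseteq> A}" .
  then show "r ` {c \<in> C. r c \<subseteq> A} = shattered_sets A (restr C A)"
    using shattered_sets_restr[OF assms] by simp
qed auto

lemma bij_betw_trace_below:
  assumes "A \<subseteq> X"
  shows "bij_betw (\<lambda>c. c \<inter> A) {c \<in> C. r c \<subseteq> A} (restr C A)"
proof -
  let ?R = "{c \<in> C. r c \<subseteq> A}"
  have inj: "inj_on (\<lambda>c. c \<inter> A) ?R"
    using non_clashing_r by (rule inj_on_Int_if_non_clashing)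
  have "finite A" using finite_X assms by (rule finite_subset[rotated])
  then have "card (restr C A) \<le> card (shattered_sets A (restr C A))"
    using restr_subset_Pow by (rule card_le_card_shattered_sets)
  also have "\<dots> = card ?R"
    using bij_betw_rep_below[OF assms] by (simp add: bij_betw_same_card)
  also have "\<dots> = card ((\<lambda>c. c \<inter> A) ` ?R)"
    using inj by (simp add: card_image)
  finally have "card (restr C A) \<le> card ((\<lambda>c. c \<inter> A) ` ?R)" .
  moreover have "(\<lambda>c. c \<inter> A) ` ?R \<subseteq> restr C A" unfolding restr_def by auto
  moreover have "finite (restr C A)"
    using \<open>finite A\<close> by (simp add: finite_subset[OF restr_subset_Pow])
  ultimately have "(\<lambda>c. c \<inter> A) ` ?R = restr C A" by (intro card_seteq)
  with inj show ?thesis unfolding bij_betw_def by simp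
qed

lemma trace_below:
  assumes "A \<subseteq> X" and "c \<in> C"
  obtains e where "e \<in> C" "r e \<subseteq> A" "e \<inter> A = c \<inter> A"
proof -
  have "c \<inter> A \<in> restr C A" unfolding restr_def using assms(2) by blast
  then have "c \<inter> A \<in> (\<lambda>e. e \<inter> A) ` {e \<in> C. r e \<subseteq> A}"
    using bij_betw_trace_below[OF assms(1)] by (simp add: bij_betw_def)
  then show ?thesis using that by blast
qed

lemma is_rep_map_Int_cube:
  assumes "S \<subseteq> X" and "T \<subseteq> X - S"
  shows "is_rep_map X (C \<inter> cube T S) (\<lambda>c. r c \<inter> S)"
proof (rule is_rep_mapI[OF finite_X])
  have TS: "T \<inter> S = {}" using assms(2) by blast
  show "r c \<inter> S \<subseteq> X" if "c \<in> C \<inter> cube T S" for c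
    using that rep_subset by blast
  show "non_clashing (\<lambda>c. r c \<inter> S) (C \<inter> cube T S)"
    unfolding non_clashing_def
  proof (intro ballI impI notI)
    fix c c' assume c: "c \<in> C \<inter> cube T S" "c' \<in> C \<inter> cube T S" "c \<noteq> c'"
      and eq: "c \<inter> (r c \<inter> S \<union> r c' \<inter> S) = c' \<inter> (r c \<inter> S \<union> r c' \<inter> S)"
    have "c - S = c' - S" using c mem_cube_iff[OF TS] by auto
    with eq have "c \<inter> (r c \<union> r c') = c' \<inter> (r c \<union> r c')"
      unfolding set_eq_iff by blast
    with c show False using non_clashing_r unfolding non_clashing_def by blast
  qed
  show "\<exists>e\<in>C \<inter> cube T S. r e \<inter> S \<subseteq> A \<and> e \<inter> A = c \<inter> A"
    if "A \<subseteq> X" and c: "c \<in> C \<inter> cube T S" for A c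
  proof -
    have "(X - S) \<union> (A \<inter> S) \<subseteq> X" using assms(1) by blast
    then obtain e where e: "e \<in> C" "r e \<subseteq> (X - S) \<union> (A \<inter> S)"
        "e \<inter> ((X - S) \<union> (A \<inter> S)) = c \<inter> ((X - S) \<union> (A \<inter> S))"
      using c trace_below by blast
    have "e - S = c - S"
      using e(1,3) c concept_subset unfolding set_eq_iff by blast
    then have "e \<in> C \<inter> cube T S" using e(1) c mem_cube_iff[OF TS] by blast
    moreover have "e \<inter> A = c \<inter> A" using e(3) \<open>A \<subseteq> X\<close> unfolding set_eq_iff by blast
    ultimately show ?thesis using e(2) by blast
  qed
qed

lemma bij_betw_rep_Int_cube:
  "S \<subseteq> X \<Longrightarrow> T \<subseteq> X - S \<Longrightarrow>
    bij_betw (\<lambda>c. r c \<inter> S) (C \<inter> cube T S) (shattered_sets X (C \<inter> cube T S))"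
  using is_rep_map_Int_cube by (simp add: is_rep_map_iff)

lemma ex_rep_Int_cube_if_subcube:
  assumes "S \<subseteq> X" "T \<subseteq> X - S" and "cube T' S' \<subseteq> C \<inter> cube T S" "T' \<inter> S' = {}" "S' \<subseteq> X"
  obtains c where "c \<in> C \<inter> cube T S" "r c \<inter> S = S'"
proof -
  have "S' \<in> shattered_sets X (C \<inter> cube T S)"
    using assms(3-5) by (rule shattered_sets_if_cube_subset)
  also have "shattered_sets X (C \<inter> cube T S) = (\<lambda>c. r c \<inter> S) ` (C \<inter> cube T S)"
    using bij_betw_rep_Int_cube[OF assms(1,2)] by (simp add: bij_betw_def)
  finally show ?thesis using that by blast
qed

lemma cube_rep_subset:
  assumes "c \<in> C"
  shows "cube (c - r c) (r c) \<subseteq> C"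
proof -
  let ?B = "cube (c - r c) (r c)"
  have "c \<in> C \<inter> ?B" using assms by (simp add: mem_cube_Diff_iff)
  moreover have "bij_betw (\<lambda>d. r d \<inter> r c) (C \<inter> ?B) (shattered_sets X (C \<inter> ?B))"
    using assms concept_subset rep_subset by (intro bij_betw_rep_Int_cube) auto
  moreover have "r c \<in> (\<lambda>d. r d \<inter> r c) ` (C \<inter> ?B)"
    using \<open>c \<in> C \<inter> ?B\<close> by (rule rev_image_eqI) simp
  ultimately have "r c \<in> shattered_sets X (C \<inter> ?B)"
    by (simp add: bij_betw_def)
  then have "shattered (C \<inter> ?B) (r c)" by (simp add: shattered_sets_def)
  then have "?B \<subseteq> C \<inter> ?B"
    by (intro cube_subset_if_shattered) auto
  then show ?thesis by blast
qed

lemma is_rep_map_restr: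
  assumes "A \<subseteq> X"
  shows "is_rep_map A (restr C A) (\<lambda>c. r (the_inv_into {e \<in> C. r e \<subseteq> A} (\<lambda>e. e \<inter> A) c))"
proof -
  let ?g = "the_inv_into {e \<in> C. r e \<subseteq> A} (\<lambda>e. e \<inter> A)"
  have g: "bij_betw ?g (restr C A) {e \<in> C. r e \<subseteq> A}"
    using bij_betw_trace_below[OF assms] by (rule bij_betw_the_inv_into)
  have g_trace: "?g c \<inter> A = c" if "c \<in> restr C A" for c
    using f_the_inv_into_f_bij_betw[OF bij_betw_trace_below[OF assms]] that by blast
  have "bij_betw (r \<circ> ?g) (restr C A) (shattered_sets A (restr C A))"
    using g bij_betw_rep_below[OF assms] by (rule bij_betw_trans)
  moreover have "non_clashing (\<lambda>c. r (?g c)) (restr C A)"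
    unfolding non_clashing_def
  proof (intro ballI impI)
    fix c c' assume c: "c \<in> restr C A" "c' \<in> restr C A" "c \<noteq> c'"
    let ?W = "r (?g c) \<union> r (?g c')"
    have gc: "?g c \<in> {e \<in> C. r e \<subseteq> A}" using g c(1) by (rule bij_betw_apply)
    have gc': "?g c' \<in> {e \<in> C. r e \<subseteq> A}" using g c(2) by (rule bij_betw_apply)
    have "?g c \<noteq> ?g c'"
      using g c unfolding bij_betw_def by (blast dest: inj_on_contraD)
    then have "?g c \<inter> ?W \<noteq> ?g c' \<inter> ?W"
      using gc gc' non_clashing_r unfolding non_clashing_def by blast
    moreover have "?W \<subseteq> A" using gc gc' by blast
    then have "?g c \<inter> ?W = (?g c \<inter> A) \<inter> ?W" "?g c' \<inter> ?W = (?g c' \<inter> A) \<inter> ?W"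
      by auto
    ultimately show "c \<inter> ?W \<noteq> c' \<inter> ?W" using g_trace c(1,2) by simp
  qed
  ultimately show ?thesis unfolding is_rep_map_iff comp_def by simp
qed

text \<open>The concept \<open>c\<^sub>B\<close> of the paper, for \<open>B\<close> the cube of \<open>2\<^sup>X\<close> with tag \<open>c\<close> and
  support \<open>Y\<close>, is the preimage of \<open>c\<close> under the bijection \<open>bij_betw_trace_below\<close> for
  \<open>A = X - Y\<close>.\<close>

lemma is_rep_map_restr_Diff:
  assumes "Y \<subseteq> X"
  shows "is_rep_map (X - Y) (restr C (X - Y)) (\<lambda>c. r (THE d. d \<in> C \<inter> cube c Y \<and> r d \<inter> Y = {}))"
proof -
  have "(THE d. d \<in> C \<inter> cube c Y \<and> r d \<inter> Y = {})
      = the_inv_into {e \<in> C. r e \<subseteq> X - Y} (\<lambda>e. e \<inter> (X - Y)) c"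
    if "c \<in> restr C (X - Y)" for c
  proof -
    have "c \<inter> Y = {}" using that restr_subset_Pow by blast
    then have "d \<in> C \<inter> cube c Y \<and> r d \<inter> Y = {} \<longleftrightarrow>
        d \<in> {e \<in> C. r e \<subseteq> X - Y} \<and> d \<inter> (X - Y) = c" for d
      using concept_subset[of d] rep_subset[of d] mem_cube_iff[of c Y d] by auto
    then show ?thesis unfolding the_inv_into_def by simp
  qed
  then show ?thesis
    using is_rep_map_restr[of "X - Y"] by (simp cong: is_rep_map_cong)
qed

definition cube_top :: "'a set \<Rightarrow> 'a set \<Rightarrow> 'a set" where
  "cube_top Y c = (THE d. d \<in> cube c Y \<and> r d \<inter> Y = Y)"

lemma ex1_cube_top:
  assumes "Y \<subseteq> X" and "c \<in> reduction X C Y"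
  shows "\<exists>!d. d \<in> cube c Y \<and> r d \<inter> Y = Y"
proof -
  have c: "c \<subseteq> X - Y" "cube c Y \<subseteq> C" "c \<inter> Y = {}"
    using assms(2) unfolding reduction_def by auto
  then have B: "C \<inter> cube c Y = cube c Y" by blast
  obtain d where "d \<in> C \<inter> cube c Y" "r d \<inter> Y = Y"
    using ex_rep_Int_cube_if_subcube[OF assms(1) c(1), of c Y] B c(3) assms(1) by blast
  moreover have "inj_on (\<lambda>d. r d \<inter> Y) (cube c Y)"
    using bij_betw_imp_inj_on[OF bij_betw_rep_Int_cube[OF assms(1) c(1)]] B by simp
  ultimately show ?thesis unfolding inj_on_def by blast
qed

lemma cube_top_spec:
  assumes "Y \<subseteq> X" and "c \<in> reduction X C Y"
  shows "cube_top Y c \<in> C" and "cube_top Y c - Y = c" and "Y \<subseteq> r (cube_top Y c)"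
proof -
  have "cube_top Y c \<in> cube c Y" "r (cube_top Y c) \<inter> Y = Y"
    using theI'[OF ex1_cube_top[OF assms]] unfolding cube_top_def by auto
  moreover have "cube c Y \<subseteq> C" "c \<inter> Y = {}" using assms(2) unfolding reduction_def by auto
  ultimately show "cube_top Y c \<in> C" "cube_top Y c - Y = c" "Y \<subseteq> r (cube_top Y c)"
    using mem_cube_iff by blast+
qed

lemma cube_top_eqI:
  assumes "Y \<subseteq> X" and "c \<in> reduction X C Y" and "f - Y = c" and "Y \<subseteq> r f"
  shows "cube_top Y c = f"
proof -
  have "c \<inter> Y = {}" using assms(2) unfolding reduction_def by auto
  then have "f \<in> cube c Y" using assms(3) mem_cube_iff by blast
  then show ?thesis
    using the1_equality[OF ex1_cube_top[OF assms(1,2)]] assms(4) unfolding cube_top_def by blast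
qed

text \<open>Two tops whose tags agree on \<open>W\<close> lie in the cube of \<open>2\<^sup>X\<close> with support \<open>X - W\<close>
  through them; there both are represented by \<open>Y\<close>, so they coincide.\<close>

lemma non_clashing_reduction:
  assumes "Y \<subseteq> X"
  shows "non_clashing (\<lambda>c. r (cube_top Y c) - Y) (reduction X C Y)"
  unfolding non_clashing_def
proof (intro ballI impI notI)
  fix c c' assume c: "c \<in> reduction X C Y" "c' \<in> reduction X C Y" "c \<noteq> c'"
  define t t' where "t = cube_top Y c" and "t' = cube_top Y c'"
  define W where "W = (r t - Y) \<union> (r t' - Y)"
  assume "c \<inter> (r (cube_top Y c) - Y \<union> (r (cube_top Y c') - Y))
    = c' \<inter> (r (cube_top Y c) - Y \<union> (r (cube_top Y c') - Y))"
  then have eq: "c \<inter> W = c' \<inter> W" unfolding W_def t_def t'_def .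
  have t: "t \<in> C" "t - Y = c" "Y \<subseteq> r t" and t': "t' \<in> C" "t' - Y = c'" "Y \<subseteq> r t'"
    using cube_top_spec[OF assms c(1)] cube_top_spec[OF assms c(2)] unfolding t_def t'_def by auto
  have W: "W \<subseteq> X" "W \<inter> Y = {}" unfolding W_def using t(1) t'(1) rep_subset by auto
  have "t \<inter> W = t' \<inter> W"
    using eq t(2) t'(2) W(2) unfolding set_eq_iff by blast
  then have "t \<in> C \<inter> cube (t \<inter> W) (X - W)" "t' \<in> C \<inter> cube (t \<inter> W) (X - W)"
    using t(1) t'(1) mem_cube_Int_Diff_iff[OF concept_subset] by auto
  moreover have "r t \<inter> (X - W) = r t' \<inter> (X - W)"
    using t(1,3) t'(1,3) rep_subset unfolding W_def set_eq_iff by blast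
  moreover have "X - W \<subseteq> X" "t \<inter> W \<subseteq> X - (X - W)" using W(1) by auto
  ultimately have "t = t'"
    using bij_betw_imp_inj_on[OF bij_betw_rep_Int_cube] unfolding inj_on_def by blast
  then show False using t(2) t'(2) c(3) by simp
qed

lemma trace_reduction:
  assumes "Y \<subseteq> X" and "A \<subseteq> X - Y" and c: "c \<in> reduction X C Y"
  obtains e where "e \<in> reduction X C Y" "r (cube_top Y e) - Y \<subseteq> A" "e \<inter> A = c \<inter> A"
proof -
  have "c \<inter> Y = {}" "cube c Y \<subseteq> C" using c unfolding reduction_def by auto
  have sub: "cube c Y \<subseteq> C \<inter> cube (c \<inter> A) (X - A)"
  proof
    fix x assume "x \<in> cube c Y"
    then have "x \<in> C" "x - Y = c" using \<open>cube c Y \<subseteq> C\<close> mem_cube_iff[OF \<open>c \<inter> Y = {}\<close>] by auto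
    moreover have "x \<inter> A = c \<inter> A" using \<open>x - Y = c\<close> assms(2) by auto
    ultimately show "x \<in> C \<inter> cube (c \<inter> A) (X - A)"
      using mem_cube_Int_Diff_iff[OF concept_subset] by auto
  qed
  have "X - A \<subseteq> X" "c \<inter> A \<subseteq> X - (X - A)" using assms(2) by auto
  then obtain f where f: "f \<in> C \<inter> cube (c \<inter> A) (X - A)" "r f \<inter> (X - A) = Y"
    using ex_rep_Int_cube_if_subcube sub \<open>c \<inter> Y = {}\<close> assms(1) by blast
  have "f \<inter> A = c \<inter> A" using f(1) mem_cube_Int_Diff_iff[OF concept_subset] by auto
  have "Y \<subseteq> r f" "r f - Y \<subseteq> A" using f rep_subset by auto
  define e where "e = f - Y"
  have "cube e Y \<subseteq> C"
    unfolding e_def using cube_Diff_subset_cube_Diff[OF \<open>Y \<subseteq> r f\<close>] cube_rep_subset f(1) by blast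
  moreover have "e \<subseteq> X - Y" unfolding e_def using f(1) concept_subset by auto
  ultimately have "e \<in> reduction X C Y" unfolding reduction_def by blast
  moreover have "cube_top Y e = f"
    using cube_top_eqI[OF assms(1) \<open>e \<in> reduction X C Y\<close>] \<open>Y \<subseteq> r f\<close> by (simp add: e_def)
  moreover have "e \<inter> A = c \<inter> A" using \<open>f \<inter> A = c \<inter> A\<close> assms(2) unfolding e_def by auto
  ultimately show ?thesis using that \<open>r f - Y \<subseteq> A\<close> by simp
qed

lemma is_rep_map_reduction:
  assumes "Y \<subseteq> X"
  shows "is_rep_map (X - Y) (reduction X C Y) (\<lambda>c. r (cube_top Y c) - Y)"
proof (rule is_rep_mapI)
  show "finite (X - Y)" using finite_X by simp
  show "r (cube_top Y c) - Y \<subseteq> X - Y" if "c \<in> reduction X C Y" for c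
    using rep_subset[OF cube_top_spec(1)[OF assms that]] by blast
  show "non_clashing (\<lambda>c. r (cube_top Y c) - Y) (reduction X C Y)"
    using assms by (rule non_clashing_reduction)
  show "\<exists>e\<in>reduction X C Y. r (cube_top Y e) - Y \<subseteq> A \<and> e \<inter> A = c \<inter> A"
    if "A \<subseteq> X - Y" and "c \<in> reduction X C Y" for A c
  proof -
    obtain e where "e \<in> reduction X C Y" "r (cube_top Y e) - Y \<subseteq> A" "e \<inter> A = c \<inter> A"
      using trace_reduction[OF assms \<open>A \<subseteq> X - Y\<close> \<open>c \<in> reduction X C Y\<close>] .
    then show ?thesis by blast
  qed
qed

end

theorem proposition6p6:
  fixes X :: "'a set" and C :: "'a set set" and r :: "'a set \<Rightarrow> 'a set"
    and T S Y :: "'a set"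
  assumes "finite X"
    and "ample X C"
    and "is_rep_map X C r"
    and "S \<subseteq> X" and "T \<subseteq> X - S"
    and "Y \<subseteq> X"
  shows "is_rep_map X (C \<inter> cube T S) (\<lambda>c. r c \<inter> S)
    \<and> is_rep_map (X - Y) (reduction X C Y)
           (\<lambda>c. r (THE d. d \<in> cube c Y \<and> r d \<inter> Y = Y) - Y)
    \<and> is_rep_map (X - Y) (restr C (X - Y))
           (\<lambda>c. r (THE d. d \<in> C \<inter> cube c Y \<and> r d \<inter> Y = {}))"
proof -
  have "C \<subseteq> Pow X" using assms(2) unfolding ample_def by (rule conjunct1)
  then interpret representation_map X C r
    using assms(1,3) by unfold_locales
  show ?thesis
    using is_rep_map_Int_cube[OF assms(4,5)] is_rep_map_reduction[OF assms(6)]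
      is_rep_map_restr_Diff[OF assms(6)]
    unfolding cube_top_def by (intro conjI)
qed

end
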